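(* Let $w\in\mathbb R^n_{\ge0}$, let $\mathcal M$ be a loopless matroid with ground set of size at most $n$, let $\rho=\rho_{\mathcal M}$, let $\alpha,\beta\in\mathbb R_{\ge1}$, and let $\tilde\rho$ be an $(\alpha,\beta)$-approximation of $\rho$. Then $F(\rho)\le 2\alpha\beta\,F(\tilde\rho)+\alpha\,w_{\max}$, where $w_{\max}=\max_i w_i$.
   Context: For a matroid $\mathcal M=(N,\mathcal I)$ with rank function $r$, $\mathrm{rank}(\mathcal M)=r(N)$; for $S\subseteq N$, $\lambda\ge0$, $D_{\mathcal M}(S,\lambda)$ is the unique inclusion-wise maximal maximizer of $|U|-\lambda r(U)$ over $U\subseteq S$. Rank-density curve: $\rho_{\mathcal M}(t)=\max\{\lambda\ge0:r(D_{\mathcal M}(N,\lambda))\ge t\}$ for $0<t\le\mathrm{rank}(\mathcal M)$, and $0$ for $t>\mathrm{rank}(\mathcal M)$. For $a\in[0,n]$, $\eta(a)=\mathbb E[\max_{i\in R}w_i]$ with $R$ a uniformly random subset of $\{1,\dots,n\}$ of size $\lfloor a\rfloor$, and $\eta(a)=0$ for $a<1$. For $\rho:\mathbb R_{>0}\to[0,n]$, $F(\rho)=\int_0^\infty\eta(\rho(t))dt$. Downshift: for a non-increasing $\rho:\mathbb R_{>0}\to\mathbb R_{\ge0}$ and $\alpha,\beta\ge1$, let $\phi(t)=\rho(\alpha)/\beta$ for $t\in(0,1]$ and $\phi(t)=\rho(\alpha t)/\beta$ for $t>1$; the $(\alpha,\beta)$-downshift $\rho'$ of $\rho$ is $\rho'(t)=1$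 if $\phi(t)\in(0,1)$ and $\rho'(t)=\phi(t)$ otherwise. A function $\tilde\rho:\mathbb R_{>0}\to\mathbb R_{\ge0}$ is an $(\alpha,\beta)$-approximation of $\rho$ if it is non-increasing and $\rho'\le\tilde\rho\le\rho$ pointwise. *)

theory Defs
  imports "HOL-Probability.Probability"
begin

definition matroid :: "'a set \<Rightarrow> ('a set \<Rightarrow> bool) \<Rightarrow> bool" where
  "matroid N indep \<longleftrightarrow>
     finite N \<and>
     (\<forall>I. indep I \<longrightarrow> I \<subseteq> N) \<and>
     indep {} \<and>
     (\<forall>I J. indep J \<and> I \<subseteq> J \<longrightarrow> indep I) \<and>
     (\<forall>I J. indep I \<and> indep J \<and> card I < card J \<longrightarrow> (\<exists>e\<in>J - I. indep (insert e I)))"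

definition loopless :: "'a set \<Rightarrow> ('a set \<Rightarrow> bool) \<Rightarrow> bool" where
  "loopless N indep \<longleftrightarrow> (\<forall>e\<in>N. indep {e})"

definition mrank :: "('a set \<Rightarrow> bool) \<Rightarrow> 'a set \<Rightarrow> nat" where
  "mrank indep U = Max {card I | I. I \<subseteq> U \<and> indep I}"

definition matroid_rank :: "'a set \<Rightarrow> ('a set \<Rightarrow> bool) \<Rightarrow> nat" where
  "matroid_rank N indep = mrank indep N"

definition dens_obj :: "('a set \<Rightarrow> bool) \<Rightarrow> real \<Rightarrow> 'a set \<Rightarrow> real" where
  "dens_obj indep lam U = real (card U) - lam * real (mrank indep U)"

definition is_dens_maximizer :: "('a set \<Rightarrow> bool) \<Rightarrow> 'a set \<Rightarrow> real \<Rightarrow> 'a set \<Rightarrow> bool" where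
  "is_dens_maximizer indep S lam U \<longleftrightarrow>
     U \<subseteq> S \<and> (\<forall>V. V \<subseteq> S \<longrightarrow> dens_obj indep lam V \<le> dens_obj indep lam U)"

definition Dset :: "('a set \<Rightarrow> bool) \<Rightarrow> 'a set \<Rightarrow> real \<Rightarrow> 'a set" where
  "Dset indep S lam = (THE U. is_dens_maximizer indep S lam U \<and>
      (\<forall>V. is_dens_maximizer indep S lam V \<and> U \<subseteq> V \<longrightarrow> V = U))"

text \<open>Rank-density curve (values for t \<le> 0 are irrelevant).\<close>
definition rank_density :: "'a set \<Rightarrow> ('a set \<Rightarrow> bool) \<Rightarrow> real \<Rightarrow> real" where
  "rank_density N indep t =
     (if 0 < t \<and> t \<le> real (matroid_rank N indep)
      then (GREATEST lam. lam \<ge> 0 \<and> real (mrank indep (Dset indep N lam)) \<ge> t)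
      else 0)"

definition eta :: "nat \<Rightarrow> (nat \<Rightarrow> real) \<Rightarrow> real \<Rightarrow> real" where
  "eta n w a =
     (if a < 1 then 0
      else measure_pmf.expectation
             (pmf_of_set {R. R \<subseteq> {1..n} \<and> card R = nat \<lfloor>a\<rfloor>})
             (\<lambda>R. Max (w ` R)))"

definition Ffun :: "nat \<Rightarrow> (nat \<Rightarrow> real) \<Rightarrow> (real \<Rightarrow> real) \<Rightarrow> ennreal" where
  "Ffun n w rho = (\<integral>\<^sup>+ t\<in>{0<..}. ennreal (eta n w (rho t)) \<partial>lborel)"

definition downshift_phi :: "real \<Rightarrow> real \<Rightarrow> (real \<Rightarrow> real) \<Rightarrow> real \<Rightarrow> real" where
  "downshift_phi \<alpha> \<beta> rho t = (if t \<le> 1 then rho \<alpha> / \<beta> else rho (\<alpha> * t) / \<beta>)"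

definition downshift :: "real \<Rightarrow> real \<Rightarrow> (real \<Rightarrow> real) \<Rightarrow> real \<Rightarrow> real" where
  "downshift \<alpha> \<beta> rho t =
     (let p = downshift_phi \<alpha> \<beta> rho t in if 0 < p \<and> p < 1 then 1 else p)"

definition is_approx :: "real \<Rightarrow> real \<Rightarrow> (real \<Rightarrow> real) \<Rightarrow> (real \<Rightarrow> real) \<Rightarrow> bool" where
  "is_approx \<alpha> \<beta> rho rho' \<longleftrightarrow>
     (\<forall>t. 0 < t \<longrightarrow> rho' t \<ge> 0) \<and>
     (\<forall>s t. 0 < s \<and> s \<le> t \<longrightarrow> rho' t \<le> rho' s) \<and>
     (\<forall>t. 0 < t \<longrightarrow> downshift \<alpha> \<beta> rho t \<le> rho' t \<and> rho' t \<le> rho t)"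

end

theory Submission
  imports Defs
begin

text \<open>Split the integral of \<open>\<eta> \<circ> \<rho>\<close> at \<open>t = \<alpha>\<close>. On \<open>(0, \<alpha>]\<close> the integrand is at most
  \<open>w\<^sub>m\<^sub>a\<^sub>x\<close>. For \<open>t = \<alpha> s\<close> with \<open>s > 1\<close> the approximation gives \<open>\<rho>'(s) \<ge> max 1 (\<rho>(t) / \<beta>)\<close>
  whenever \<open>\<rho>(t) \<ge> 1\<close>. On integer arguments \<open>\<eta>\<close> is non-decreasing and \<open>\<eta>(k)/k\<close> is
  non-increasing (both by double counting pairs of a \<open>(k+1)\<close>-subset and one of its \<open>k\<close>-subsets),
  and \<open>\<lfloor>a\<rfloor> \<le> 2 \<beta> \<lfloor>max 1 (a/\<beta>)\<rfloor>\<close>; hence \<open>\<eta>(\<rho>(t)) \<le> 2 \<beta> \<eta>(\<rho>'(s))\<close>, and the substitution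
  \<open>t = \<alpha> s\<close> contributes the factor \<open>\<alpha>\<close>.

  The matroid structure only serves to show that \<open>\<rho>\<close> is well defined with values in
  \<open>[0, |N|]\<close>: submodularity of the rank makes density maximizers closed under union, so
  \<open>D(N, \<lambda>)\<close> exists, and the set of \<open>\<lambda>\<close> with \<open>r(D(N, \<lambda>)) \<ge> t\<close> is a finite union of closed sets,
  bounded by \<open>|N|\<close> by looplessness, so it has a greatest element.\<close>

section \<open>Expected maximum of a random subset\<close>

definition ksubsets :: "nat \<Rightarrow> nat \<Rightarrow> nat set set" where
  "ksubsets n k = {R. R \<subseteq> {1..n} \<and> card R = k}"

lemma ksubsetsD: "R \<in> ksubsets n k \<Longrightarrow> R \<subseteq> {1..n} \<and> finite R \<and> card R = k"
  unfolding ksubsets_def by (auto intro: finite_subset)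

lemma finite_ksubsets: "finite (ksubsets n k)"
  unfolding ksubsets_def by (rule finite_subset[of _ "Pow {1..n}"]) auto

lemma card_ksubsets: "card (ksubsets n k) = n choose k"
  unfolding ksubsets_def using n_subsets[of "{1..n}" k] by simp

lemma sum_ksubsets_Suc_remove:
  fixes g :: "nat set \<Rightarrow> real"
  assumes "k < n"
  shows "(\<Sum>R\<in>ksubsets n (Suc k). \<Sum>x\<in>R. g (R - {x})) = real (n - k) * (\<Sum>P\<in>ksubsets n k. g P)"
proof -
  have "(\<Sum>R\<in>ksubsets n (Suc k). \<Sum>x\<in>R. g (R - {x}))
      = (\<Sum>(R,x)\<in>Sigma (ksubsets n (Suc k)) (\<lambda>R. R). g (R - {x}))"
    by (rule sum.Sigma) (auto simp: finite_ksubsets dest: ksubsetsD)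
  also have "\<dots> = (\<Sum>(P,x)\<in>Sigma (ksubsets n k) (\<lambda>P. {1..n} - P). g P)"
    by (rule sum.reindex_bij_witness[where i="\<lambda>(P,x). (insert x P, x)" and j="\<lambda>(R,x). (R - {x}, x)"])
      (auto simp: ksubsets_def card_insert_if insert_absorb dest: finite_subset[OF _ finite_atLeastAtMost])
  also have "\<dots> = (\<Sum>P\<in>ksubsets n k. \<Sum>x\<in>{1..n} - P. g P)"
    by (rule sum.Sigma[symmetric]) (auto simp: finite_ksubsets)
  also have "\<dots> = (\<Sum>P\<in>ksubsets n k. real (n - k) * g P)"
    by (rule sum.cong) (auto dest!: ksubsetsD simp: card_Diff_subset)
  finally show ?thesis by (simp add: sum_distrib_left)
qed

lemma eta_of_nat:
  assumes "1 \<le> k" "k \<le> n"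
  shows "real (n choose k) * eta n w (real k) = (\<Sum>R\<in>ksubsets n k. Max (w ` R))"
proof -
  have "ksubsets n k \<noteq> {}"
    using assms card_ksubsets[of n k] zero_less_binomial[OF assms(2)] by auto
  then have "eta n w (real k) = (\<Sum>R\<in>ksubsets n k. Max (w ` R)) / card (ksubsets n k)"
    using assms finite_ksubsets[of n k]
    by (simp add: eta_def ksubsets_def[symmetric] integral_pmf_of_set del: One_nat_def)
  then show ?thesis
    using zero_less_binomial[OF assms(2)] by (simp add: card_ksubsets)
qed

lemma sum_Max_remove_le:
  fixes w :: "'a \<Rightarrow> real"
  assumes "finite R" "2 \<le> card R"
  shows "(\<Sum>x\<in>R. Max (w ` (R - {x}))) \<le> real (card R) * Max (w ` R)"
proof -
  have "Max (w ` (R - {x})) \<le> Max (w ` R)" if "x \<in> R" for x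
  proof -
    have "card (R - {x}) \<noteq> 0" using assms that by (simp add: card_Diff_singleton)
    then have "R - {x} \<noteq> {}" by (metis card.empty)
    then show ?thesis using assms by (intro Max_mono) auto
  qed
  then show ?thesis by (metis (no_types, lifting) sum_bounded_above)
qed

lemma sum_Max_remove_ge:
  fixes w :: "'a \<Rightarrow> real"
  assumes "finite R" "2 \<le> card R" "\<forall>x\<in>R. 0 \<le> w x"
  shows "real (card R - 1) * Max (w ` R) \<le> (\<Sum>x\<in>R. Max (w ` (R - {x})))"
proof -
  obtain y where y: "y \<in> R" "w y = Max (w ` R)"
    using assms Max_in[of "w ` R"] by fastforce
  have "real (card R - 1) * Max (w ` R) = (\<Sum>x\<in>R - {y}. w y)"
    using assms y by (simp add: card_Diff_singleton)
  also have "\<dots> \<le> (\<Sum>x\<in>R - {y}. Max (w ` (R - {x})))"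
    using assms(1) y(1) by (intro sum_mono Max_ge) auto
  also have "\<dots> \<le> (\<Sum>x\<in>R. Max (w ` (R - {x})))"
  proof -
    have "card (R - {y}) \<noteq> 0" using assms y by (simp add: card_Diff_singleton)
    then obtain z where "z \<in> R - {y}" by (metis card.empty ex_in_conv)
    then have "0 \<le> Max (w ` (R - {y}))"
      using assms by (meson Max_ge DiffD1 finite_Diff finite_imageI image_eqI order_trans)
    then show ?thesis using assms y by (simp add: sum.remove)
  qed
  finally show ?thesis .
qed

lemma sum_ksubsets_Max_remove:
  assumes "1 \<le> k" "k < n"
  shows "(\<Sum>R\<in>ksubsets n (Suc k). \<Sum>x\<in>R. Max (w ` (R - {x})))
           = real (Suc k) * real (n choose Suc k) * eta n w (real k)"
proof -
  have "real (Suc k) * real (n choose Suc k) = (\<Sum>R\<in>ksubsets n (Suc k). \<Sum>x\<in>R. 1)"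
    by (simp add: card_ksubsets[symmetric] ksubsetsD)
  also have "\<dots> = real (n - k) * real (n choose k)"
    using sum_ksubsets_Suc_remove[OF assms(2), of "\<lambda>_. 1"] by (simp add: card_ksubsets)
  finally have card_rel: "real (n - k) * real (n choose k) = real (Suc k) * real (n choose Suc k)" ..
  have "(\<Sum>R\<in>ksubsets n (Suc k). \<Sum>x\<in>R. Max (w ` (R - {x})))
      = real (n - k) * (real (n choose k) * eta n w (real k))"
    using sum_ksubsets_Suc_remove[OF assms(2), of "\<lambda>R. Max (w ` R)"] eta_of_nat[of k n w] assms
    by simp
  then show ?thesis by (simp only: card_rel mult.assoc[symmetric])
qed

lemma eta_step:
  assumes "1 \<le> k" "k < n" "\<forall>i\<in>{1..n}. 0 \<le> w i"
  shows "eta n w (real k) \<le> eta n w (real (Suc k))"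
    and "real k * eta n w (real (Suc k)) \<le> real (Suc k) * eta n w (real k)"
proof -
  define A where "A = (\<Sum>R\<in>ksubsets n (Suc k). \<Sum>x\<in>R. Max (w ` (R - {x})))"
  define C where "C = real (n choose Suc k)"
  have C: "0 < C" unfolding C_def using assms by simp
  have A_eq: "A = real (Suc k) * C * eta n w (real k)"
    unfolding A_def C_def using sum_ksubsets_Max_remove[OF assms(1,2)] .
  have sum_eq: "(\<Sum>R\<in>ksubsets n (Suc k). Max (w ` R)) = C * eta n w (real (Suc k))"
    using eta_of_nat[of "Suc k" n w] assms by (simp add: C_def)
  have "A \<le> (\<Sum>R\<in>ksubsets n (Suc k). real (Suc k) * Max (w ` R))"
    unfolding A_def
  proof (rule sum_mono)
    fix R assume "R \<in> ksubsets n (Suc k)"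
    then show "(\<Sum>x\<in>R. Max (w ` (R - {x}))) \<le> real (Suc k) * Max (w ` R)"
      using sum_Max_remove_le[of R w] assms(1) by (simp add: ksubsetsD)
  qed
  then have "real (Suc k) * C * eta n w (real k) \<le> real (Suc k) * (C * eta n w (real (Suc k)))"
    by (simp add: A_eq sum_eq sum_distrib_left[symmetric])
  then show "eta n w (real k) \<le> eta n w (real (Suc k))"
    using C by (simp add: mult.assoc)
  have "(\<Sum>R\<in>ksubsets n (Suc k). real k * Max (w ` R)) \<le> A"
    unfolding A_def
  proof (rule sum_mono)
    fix R assume "R \<in> ksubsets n (Suc k)"
    then show "real k * Max (w ` R) \<le> (\<Sum>x\<in>R. Max (w ` (R - {x})))"
      using sum_Max_remove_ge[of R w] assms(1,3) ksubsetsD[of R n "Suc k"] by auto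
  qed
  then have "C * (real k * eta n w (real (Suc k))) \<le> C * (real (Suc k) * eta n w (real k))"
    by (simp add: A_eq sum_eq sum_distrib_left[symmetric] algebra_simps)
  then show "real k * eta n w (real (Suc k)) \<le> real (Suc k) * eta n w (real k)"
    using C by (simp only: mult_le_cancel_left_pos)
qed

lemma eta_of_nat_bounds:
  assumes "1 \<le> k" "k \<le> n" "\<forall>i\<in>{1..n}. 0 \<le> w i"
  shows "0 \<le> eta n w (real k)" "eta n w (real k) \<le> Max (w ` {1..n})"
proof -
  have C: "0 < real (n choose k)" using assms by simp
  have "0 \<le> Max (w ` R) \<and> Max (w ` R) \<le> Max (w ` {1..n})" if "R \<in> ksubsets n k" for R
  proof -
    from ksubsetsD[OF that] have R: "R \<subseteq> {1..n}" "finite R" "R \<noteq> {}"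
      using assms(1) by auto
    then obtain x where x: "x \<in> R" by blast
    have "0 \<le> w x" using x R assms(3) by auto
    also have "w x \<le> Max (w ` R)" using x R by simp
    finally show ?thesis using R Max_mono[of "w ` R" "w ` {1..n}"] by auto
  qed
  then have "0 \<le> (\<Sum>R\<in>ksubsets n k. Max (w ` R))"
    and "(\<Sum>R\<in>ksubsets n k. Max (w ` R)) \<le> real (n choose k) * Max (w ` {1..n})"
    using sum_bounded_above[of "ksubsets n k" "\<lambda>R. Max (w ` R)" "Max (w ` {1..n})"]
    by (auto intro: sum_nonneg simp: card_ksubsets)
  moreover have "eta n w (real k) = (\<Sum>R\<in>ksubsets n k. Max (w ` R)) / real (n choose k)"
    using eta_of_nat[OF assms(1,2), of w] C by (simp add: field_simps)
  ultimately show "0 \<le> eta n w (real k)" "eta n w (real k) \<le> Max (w ` {1..n})"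
    using C by (simp_all add: divide_le_eq mult.commute)
qed

lemma eta_mono_nat:
  assumes "1 \<le> m" "m \<le> k" "k \<le> n" "\<forall>i\<in>{1..n}. 0 \<le> w i"
  shows "eta n w (real m) \<le> eta n w (real k)"
  using assms(2,3)
proof (induction k rule: dec_induct)
  case (step k)
  then show ?case using eta_step(1)[of k n w] assms(1,4) by simp
qed simp

lemma eta_ratio_nat:
  assumes "1 \<le> m" "m \<le> k" "k \<le> n" "\<forall>i\<in>{1..n}. 0 \<le> w i"
  shows "real m * eta n w (real k) \<le> real k * eta n w (real m)"
  using assms(2,3)
proof (induction k rule: dec_induct)
  case (step k)
  have "real k * eta n w (real (Suc k)) \<le> real (Suc k) * eta n w (real k)"
    using eta_step(2)[of k n w] step assms(1,4) by simp
  then have "real k * (real m * eta n w (real (Suc k))) \<le> real m * (real (Suc k) * eta n w (real k))"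
    by (metis mult.left_commute mult_left_mono of_nat_0_le_iff)
  also have "\<dots> = real (Suc k) * (real m * eta n w (real k))" by (simp add: algebra_simps)
  also have "\<dots> \<le> real (Suc k) * (real k * eta n w (real m))"
    using step by (intro mult_left_mono) auto
  finally have "real k * (real m * eta n w (real (Suc k))) \<le> real k * (real (Suc k) * eta n w (real m))"
    by (simp add: algebra_simps)
  then show ?case using step assms(1) by simp
qed simp

lemma eta_floor: "1 \<le> a \<Longrightarrow> eta n w a = eta n w (real (nat \<lfloor>a\<rfloor>))"
  by (simp add: eta_def)

lemma nat_floor_bounds:
  assumes "1 \<le> a" "a \<le> real n"
  shows "1 \<le> nat \<lfloor>a\<rfloor>" "nat \<lfloor>a\<rfloor> \<le> n" "real (nat \<lfloor>a\<rfloor>) \<le> a" "a < real (nat \<lfloor>a\<rfloor>) + 1"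
  using assms by (simp_all add: le_nat_iff le_floor_iff nat_le_iff floor_le_iff)

lemma eta_nonneg:
  assumes "a \<le> real n" "\<forall>i\<in>{1..n}. 0 \<le> w i"
  shows "0 \<le> eta n w a"
  using eta_floor[of a n w] nat_floor_bounds[OF _ assms(1)] eta_of_nat_bounds(1)[OF _ _ assms(2)]
  by (cases "a < 1") (auto simp: eta_def)

lemma eta_le_Max:
  assumes "1 \<le> n" "a \<le> real n" "\<forall>i\<in>{1..n}. 0 \<le> w i"
  shows "eta n w a \<le> Max (w ` {1..n})"
proof (cases "a < 1")
  case True
  have "0 \<le> w 1" using assms by simp
  also have "\<dots> \<le> Max (w ` {1..n})" using assms by simp
  finally show ?thesis using True by (simp add: eta_def)
next
  case False
  then have "1 \<le> a" by simp
  show ?thesis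
    unfolding eta_floor[OF \<open>1 \<le> a\<close>]
    by (rule eta_of_nat_bounds(2)[OF nat_floor_bounds(1,2)[OF \<open>1 \<le> a\<close> assms(2)] assms(3)])
qed

lemma eta_mono:
  assumes "a \<le> b" "b \<le> real n" "\<forall>i\<in>{1..n}. 0 \<le> w i"
  shows "eta n w a \<le> eta n w b"
proof (cases "a < 1")
  case True
  then show ?thesis using eta_nonneg[OF assms(2,3)] by (simp add: eta_def)
next
  case False
  then have "1 \<le> a" "1 \<le> b" "a \<le> real n" using assms(1,2) by simp_all
  moreover have "nat \<lfloor>a\<rfloor> \<le> nat \<lfloor>b\<rfloor>" using assms(1) by (simp add: floor_mono nat_mono)
  ultimately show ?thesis
    unfolding eta_floor[OF \<open>1 \<le> a\<close>] eta_floor[OF \<open>1 \<le> b\<close>]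
    by (intro eta_mono_nat[OF nat_floor_bounds(1)[of a n] _ nat_floor_bounds(2)[of b n] assms(3)] assms(2))
qed

lemma eta_le_scaled:
  assumes "1 \<le> a" "a \<le> real n" "1 \<le> \<beta>" "max 1 (a / \<beta>) \<le> b" "b \<le> real n"
    and "\<forall>i\<in>{1..n}. 0 \<le> w i"
  shows "eta n w a \<le> 2 * \<beta> * eta n w b"
proof -
  define c where "c = max 1 (a / \<beta>)"
  define k where "k = nat \<lfloor>a\<rfloor>"
  define m where "m = nat \<lfloor>c\<rfloor>"
  have "a / \<beta> \<le> a" using assms(1,3) by (simp add: divide_le_eq mult_le_cancel_left1)
  then have c: "1 \<le> c" "c \<le> a" "c \<le> real n" using assms(1,2) by (auto simp: c_def)
  note k = nat_floor_bounds[OF assms(1,2), folded k_def]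
  note m = nat_floor_bounds[OF c(1,3), folded m_def]
  have mk: "m \<le> k" unfolding m_def k_def using c(2) by (simp add: floor_mono nat_mono)
  have "a < \<beta> * (real m + 1)"
    using m(4) assms(3) by (auto simp: c_def divide_less_eq mult.commute)
  also have "\<dots> \<le> 2 * \<beta> * real m" using m(1) assms(3) by (simp add: algebra_simps)
  finally have km: "real k \<le> 2 * \<beta> * real m" using k(3) by linarith
  have "real m * eta n w (real k) \<le> real k * eta n w (real m)"
    using eta_ratio_nat[OF m(1) mk k(2) assms(6)] .
  also have "\<dots> \<le> real m * (2 * \<beta> * eta n w (real m))"
    using mult_right_mono[OF km eta_of_nat_bounds(1)[OF m(1,2) assms(6)]] by (simp add: algebra_simps)
  finally have "eta n w (real k) \<le> 2 * \<beta> * eta n w (real m)"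
    using m(1) by (simp add: mult_le_cancel_left_pos)
  also have "eta n w (real m) \<le> eta n w b"
    using order_trans[OF m(3) assms(4)[folded c_def]] by (intro eta_mono assms(5,6))
  finally show ?thesis
    using assms(1,3) eta_floor[of a n w] by (simp add: k_def mult_left_mono)
qed

section \<open>Matroid rank and maximal densest sets\<close>

lemma matroid_finite: "matroid N indep \<Longrightarrow> finite N"
  unfolding matroid_def by simp

lemma matroid_indep_subset: "matroid N indep \<Longrightarrow> indep I \<Longrightarrow> I \<subseteq> N"
  unfolding matroid_def by blast

lemma matroid_indep_finite: "matroid N indep \<Longrightarrow> indep I \<Longrightarrow> finite I"
  using matroid_finite matroid_indep_subset finite_subset by metis

lemma matroid_indep_downward: "matroid N indep \<Longrightarrow> indep J \<Longrightarrow> I \<subseteq> J \<Longrightarrow> indep I"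
  unfolding matroid_def by blast

lemma matroid_augment:
  "matroid N indep \<Longrightarrow> indep I \<Longrightarrow> indep J \<Longrightarrow> card I < card J \<Longrightarrow> \<exists>e\<in>J - I. indep (insert e I)"
  unfolding matroid_def by blast

lemma finite_indep_cards:
  "matroid N indep \<Longrightarrow> finite {card I | I. I \<subseteq> U \<and> indep I}"
  by (rule finite_subset[of _ "card ` Pow N"]) (auto dest: matroid_indep_subset matroid_finite)

lemma card_le_mrank: "matroid N indep \<Longrightarrow> indep I \<Longrightarrow> I \<subseteq> U \<Longrightarrow> card I \<le> mrank indep U"
  unfolding mrank_def by (rule Max_ge[OF finite_indep_cards]) auto

lemma mrank_witness:
  assumes "matroid N indep"
  obtains I where "I \<subseteq> U" "indep I" "card I = mrank indep U"
proof -
  have "indep {}" using assms unfolding matroid_def by blast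
  then have "mrank indep U \<in> {card I | I. I \<subseteq> U \<and> indep I}"
    unfolding mrank_def by (intro Max_in finite_indep_cards[OF assms]) auto
  then show ?thesis using that by auto
qed

lemma mrank_mono: "matroid N indep \<Longrightarrow> U \<subseteq> V \<Longrightarrow> mrank indep U \<le> mrank indep V"
  by (metis card_le_mrank mrank_witness order_trans)

lemma mrank_empty: "matroid N indep \<Longrightarrow> mrank indep {} = 0"
  by (metis card.empty mrank_witness subset_empty)

lemma indep_extend_to_mrank:
  assumes "matroid N indep" "indep I" "I \<subseteq> X"
  shows "\<exists>J. I \<subseteq> J \<and> J \<subseteq> X \<and> indep J \<and> card J = mrank indep X"
  using assms(2,3)
proof (induction "mrank indep X - card I" arbitrary: I rule: less_induct)
  case less
  obtain K where K: "K \<subseteq> X" "indep K" "card K = mrank indep X"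
    using mrank_witness[OF assms(1)] by blast
  have le: "card I \<le> mrank indep X" using card_le_mrank[OF assms(1) less.prems] .
  show ?case
  proof (cases "card I = mrank indep X")
    case True
    then show ?thesis using less.prems by blast
  next
    case False
    then obtain e where e: "e \<in> K - I" "indep (insert e I)"
      using matroid_augment[OF assms(1) less.prems(1) K(2)] le K(3) by fastforce
    have "card (insert e I) = Suc (card I)"
      using e matroid_indep_finite[OF assms(1) less.prems(1)] by simp
    then have "mrank indep X - card (insert e I) < mrank indep X - card I" using False le by simp
    moreover have "insert e I \<subseteq> X" using e K less.prems by auto
    ultimately show ?thesis using less.hyps[of "insert e I"] e(2) by blast
  qed
qed

lemma mrank_submodular:
  assumes "matroid N indep"
  shows "mrank indep (A \<union> B) + mrank indep (A \<inter> B) \<le> mrank indep A + mrank indep B"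
proof -
  obtain I where I: "I \<subseteq> A \<inter> B" "indep I" "card I = mrank indep (A \<inter> B)"
    using mrank_witness[OF assms] by blast
  then obtain J where J: "I \<subseteq> J" "J \<subseteq> A \<union> B" "indep J" "card J = mrank indep (A \<union> B)"
    using indep_extend_to_mrank[OF assms, of I "A \<union> B"] by blast
  have fJ: "finite J" using matroid_indep_finite[OF assms J(3)] .
  have "card (J \<inter> A) \<le> mrank indep A"
    using card_le_mrank[OF assms matroid_indep_downward[OF assms J(3), of "J \<inter> A"]] by simp
  moreover have "card (J \<inter> B) \<le> mrank indep B"
    using card_le_mrank[OF assms matroid_indep_downward[OF assms J(3), of "J \<inter> B"]] by simp
  moreover have "card (J \<inter> A) + card (J \<inter> B) = card ((J \<inter> A) \<union> (J \<inter> B)) + card ((J \<inter> A) \<inter> (J \<inter> B))"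
    using fJ by (intro card_Un_Int) simp_all
  moreover have "card ((J \<inter> A) \<union> (J \<inter> B)) = card J"
    using J(2) by (simp add: Int_Un_distrib[symmetric] Int_absorb2)
  moreover have "card I \<le> card ((J \<inter> A) \<inter> (J \<inter> B))" using fJ I J by (intro card_mono) (simp, blast)
  ultimately show ?thesis using I J by linarith
qed

lemma dens_maximizer_Un:
  assumes "matroid N indep" "0 \<le> lam"
    and "is_dens_maximizer indep N lam U" "is_dens_maximizer indep N lam V"
  shows "is_dens_maximizer indep N lam (U \<union> V)"
proof -
  have UV: "U \<subseteq> N" "V \<subseteq> N" using assms(3,4) unfolding is_dens_maximizer_def by auto
  then have fin: "finite U" "finite V" using matroid_finite[OF assms(1)] finite_subset by auto
  have "lam * (real (mrank indep (U \<union> V)) + real (mrank indep (U \<inter> V)))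
      \<le> lam * (real (mrank indep U) + real (mrank indep V))"
    using mrank_submodular[OF assms(1), of U V] assms(2) by (intro mult_left_mono) linarith+
  then have "dens_obj indep lam U + dens_obj indep lam V
      \<le> dens_obj indep lam (U \<union> V) + dens_obj indep lam (U \<inter> V)"
    using card_Un_Int[OF fin] unfolding dens_obj_def by (simp add: algebra_simps)
  moreover have "dens_obj indep lam (U \<inter> V) \<le> dens_obj indep lam V"
    using assms(4) UV unfolding is_dens_maximizer_def by blast
  ultimately show ?thesis
    using assms(3) UV unfolding is_dens_maximizer_def by (smt (verit) Un_subset_iff)
qed

lemma dens_maximizer_exists:
  assumes "finite N"
  shows "\<exists>U. is_dens_maximizer indep N lam U"
proof -
  obtain U where "U \<in> Pow N" "dens_obj indep lam U = Max (dens_obj indep lam ` Pow N)"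
    using Max_in[of "dens_obj indep lam ` Pow N"] assms by fastforce
  then have "is_dens_maximizer indep N lam U"
    unfolding is_dens_maximizer_def using assms by auto
  then show ?thesis ..
qed

lemma dens_maximizer_Union:
  assumes "matroid N indep" "0 \<le> lam"
    and "finite \<G>" "\<G> \<noteq> {}" "\<forall>U\<in>\<G>. is_dens_maximizer indep N lam U"
  shows "is_dens_maximizer indep N lam (\<Union>\<G>)"
  using assms(3-5)
  by (induction \<G> rule: finite_ne_induct) (auto intro: dens_maximizer_Un[OF assms(1,2)])

lemma Union_dens_maximizers:
  assumes "matroid N indep" "0 \<le> lam"
  shows "is_dens_maximizer indep N lam (\<Union>{U. is_dens_maximizer indep N lam U})"
proof (rule dens_maximizer_Union[OF assms])
  have "{U. is_dens_maximizer indep N lam U} \<subseteq> Pow N" unfolding is_dens_maximizer_def by auto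
  then show "finite {U. is_dens_maximizer indep N lam U}"
    using matroid_finite[OF assms(1)] by (meson finite_Pow_iff finite_subset)
  show "{U. is_dens_maximizer indep N lam U} \<noteq> {}"
    using dens_maximizer_exists[OF matroid_finite[OF assms(1)]] by blast
qed simp

lemma Dset_eq_Union_maximizers:
  assumes "matroid N indep" "0 \<le> lam"
  shows "Dset indep N lam = \<Union>{U. is_dens_maximizer indep N lam U}"
  unfolding Dset_def using Union_dens_maximizers[OF assms] by (intro the_equality) auto

lemma Dset_is_dens_maximizer:
  "matroid N indep \<Longrightarrow> 0 \<le> lam \<Longrightarrow> is_dens_maximizer indep N lam (Dset indep N lam)"
  by (simp add: Dset_eq_Union_maximizers Union_dens_maximizers)

lemma dens_maximizer_subset_Dset:
  "matroid N indep \<Longrightarrow> 0 \<le> lam \<Longrightarrow> is_dens_maximizer indep N lam U \<Longrightarrow> U \<subseteq> Dset indep N lam"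
  by (auto simp: Dset_eq_Union_maximizers)

lemma Dset_zero: "matroid N indep \<Longrightarrow> Dset indep N 0 = N"
  using dens_maximizer_subset_Dset[of N indep 0 N] Dset_is_dens_maximizer[of N indep 0]
  by (auto simp: is_dens_maximizer_def dens_obj_def card_mono matroid_finite)

lemma dens_maximizer_empty_if_large:
  assumes "matroid N indep" "loopless N indep" "real (card N) < lam"
    and "is_dens_maximizer indep N lam D"
  shows "D = {}"
proof (rule ccontr)
  assume "D \<noteq> {}"
  then obtain e where "e \<in> D" by blast
  have D: "D \<subseteq> N" using assms(4) unfolding is_dens_maximizer_def by simp
  then have "1 \<le> mrank indep D"
    using card_le_mrank[OF assms(1), of "{e}" D] assms(2) \<open>e \<in> D\<close> unfolding loopless_def by auto
  then have "lam \<le> lam * real (mrank indep D)" using assms(3) by simp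
  moreover have "card D \<le> card N" using D matroid_finite[OF assms(1)] by (rule card_mono[rotated])
  ultimately have "real (card D) < lam * real (mrank indep D)" using assms(3) by linarith
  then have "dens_obj indep lam D < dens_obj indep lam {}"
    using mrank_empty[OF assms(1)] unfolding dens_obj_def by simp
  then show False using assms(4) unfolding is_dens_maximizer_def by fastforce
qed

lemma closed_Dset_rank_level:
  assumes "matroid N indep"
  shows "closed {lam. 0 \<le> lam \<and> t \<le> real (mrank indep (Dset indep N lam))}"
proof -
  define C where "C U = {lam. 0 \<le> lam} \<inter> (\<Inter>V\<in>Pow N. {lam. dens_obj indep lam V \<le> dens_obj indep lam U})" for U
  have "{lam. 0 \<le> lam \<and> t \<le> real (mrank indep (Dset indep N lam))}
      = (\<Union>U\<in>{U\<in>Pow N. t \<le> real (mrank indep U)}. C U)"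
  proof (intro equalityI subsetI)
    fix lam assume "lam \<in> {lam. 0 \<le> lam \<and> t \<le> real (mrank indep (Dset indep N lam))}"
    then show "lam \<in> (\<Union>U\<in>{U\<in>Pow N. t \<le> real (mrank indep U)}. C U)"
      using Dset_is_dens_maximizer[OF assms, of lam]
      by (auto simp: C_def is_dens_maximizer_def intro!: bexI[of _ "Dset indep N lam"])
  next
    fix lam assume "lam \<in> (\<Union>U\<in>{U\<in>Pow N. t \<le> real (mrank indep U)}. C U)"
    then obtain U where U: "U \<subseteq> N" "t \<le> real (mrank indep U)" "0 \<le> lam"
      "is_dens_maximizer indep N lam U"
      unfolding C_def is_dens_maximizer_def by auto
    then have "mrank indep U \<le> mrank indep (Dset indep N lam)"
      using mrank_mono[OF assms dens_maximizer_subset_Dset[OF assms]] by simp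
    then show "lam \<in> {lam. 0 \<le> lam \<and> t \<le> real (mrank indep (Dset indep N lam))}" using U by simp
  qed
  moreover have "closed (C U)" for U
    unfolding C_def dens_obj_def
    by (intro closed_Int closed_INT ballI closed_Collect_le continuous_intros)
  ultimately show ?thesis
    using matroid_finite[OF assms] by (auto intro: closed_UN)
qed

lemma rank_density_bounds:
  assumes "matroid N indep" "loopless N indep"
  shows "0 \<le> rank_density N indep t" "rank_density N indep t \<le> real (card N)"
proof -
  define S where "S = {lam. 0 \<le> lam \<and> t \<le> real (mrank indep (Dset indep N lam))}"
  have "0 \<le> rank_density N indep t \<and> rank_density N indep t \<le> real (card N)"
  proof (cases "0 < t \<and> t \<le> real (matroid_rank N indep)")
    case True
    have "0 \<in> S" using True Dset_zero[OF assms(1)] by (simp add: S_def matroid_rank_def)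
    have S_le: "lam \<le> real (card N)" if "lam \<in> S" for lam
    proof (rule ccontr)
      assume "\<not> lam \<le> real (card N)"
      then have "Dset indep N lam = {}"
        using that dens_maximizer_empty_if_large[OF assms _ Dset_is_dens_maximizer[OF assms(1)]]
        by (simp add: S_def)
      then show False using that True mrank_empty[OF assms(1)] by (simp add: S_def)
    qed
    then have "bdd_above S" by (auto simp: bdd_above_def)
    moreover have "closed S" unfolding S_def by (rule closed_Dset_rank_level[OF assms(1)])
    ultimately have "Sup S \<in> S" using closed_contains_Sup \<open>0 \<in> S\<close> by blast
    then have "rank_density N indep t = Sup S"
      unfolding rank_density_def S_def[symmetric] using True \<open>bdd_above S\<close>
      by (auto intro!: Greatest_equality cSup_upper simp: S_def)
    then show ?thesis using \<open>Sup S \<in> S\<close> S_le by (auto simp: S_def)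
  qed (auto simp: rank_density_def)
  then show "0 \<le> rank_density N indep t" "rank_density N indep t \<le> real (card N)" by auto
qed

section \<open>The integral bound\<close>

lemma nn_integral_split_rescaled:
  fixes f g :: "real \<Rightarrow> ennreal" and c K :: ennreal
  assumes "0 < \<alpha>" "g \<in> borel_measurable borel"
    and "\<And>t. 0 < t \<Longrightarrow> t \<le> \<alpha> \<Longrightarrow> f t \<le> c"
    and "\<And>t. \<alpha> < t \<Longrightarrow> f t \<le> K * g (t / \<alpha>)"
  shows "(\<integral>\<^sup>+t\<in>{0<..}. f t \<partial>lborel)
           \<le> ennreal \<alpha> * c + ennreal \<alpha> * K * (\<integral>\<^sup>+s\<in>{1<..}. g s \<partial>lborel)"
proof -
  define h where "h s = g s * indicator {1<..} s" for s
  have h[measurable]: "h \<in> borel_measurable borel" unfolding h_def using assms(2) by measurable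
  have "f t * indicator {0<..} t \<le> c * indicator {0<..\<alpha>} t + K * h (t / \<alpha>)" for t
    using assms(1) assms(3,4)[of t] by (cases "0 < t"; cases "t \<le> \<alpha>") (auto simp: h_def field_simps)
  then have "(\<integral>\<^sup>+t\<in>{0<..}. f t \<partial>lborel)
      \<le> (\<integral>\<^sup>+t. c * indicator {0<..\<alpha>} t + K * h (t / \<alpha>) \<partial>lborel)"
    by (intro nn_integral_mono)
  also have "\<dots> = c * ennreal \<alpha> + K * (\<integral>\<^sup>+t. h (t / \<alpha>) \<partial>lborel)"
    using assms(1) by (subst nn_integral_add) (auto simp: nn_integral_cmult)
  also have "(\<integral>\<^sup>+t. h (t / \<alpha>) \<partial>lborel) = ennreal \<alpha> * (\<integral>\<^sup>+s. h s \<partial>lborel)"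
    using nn_integral_real_affine[of "\<lambda>t. h (t / \<alpha>)" \<alpha> 0] assms(1) by simp
  finally show ?thesis by (simp add: h_def mult_ac)
qed

lemma borel_measurable_antimono:
  fixes f :: "real \<Rightarrow> real"
  assumes "antimono f"
  shows "f \<in> borel_measurable borel"
proof -
  have "(\<lambda>x. - f x) \<in> borel_measurable borel"
    using assms by (intro borel_measurable_mono) (auto simp: mono_def antimono_def)
  then show ?thesis by (metis borel_measurable_uminus_eq)
qed

lemma eta_le_approx:
  assumes "is_approx \<alpha> \<beta> rho rho'" "1 \<le> \<alpha>" "1 \<le> \<beta>" "1 < s"
    and "\<forall>t>0. rho t \<le> real n" "\<forall>i\<in>{1..n}. 0 \<le> w i"
  shows "eta n w (rho (\<alpha> * s)) \<le> 2 * \<beta> * eta n w (rho' s)"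
proof -
  define a where "a = rho (\<alpha> * s)"
  have s: "0 < s" "0 < \<alpha> * s" using assms(2,4) by auto
  have rho': "downshift \<alpha> \<beta> rho s \<le> rho' s" "rho' s \<le> real n"
    using assms(1,5) s unfolding is_approx_def by (auto intro: order_trans)
  show ?thesis
  proof (cases "a < 1")
    case True
    then show ?thesis
      using eta_nonneg[OF rho'(2) assms(6)] assms(3) by (simp add: a_def eta_def)
  next
    case False
    then have "downshift \<alpha> \<beta> rho s = max 1 (a / \<beta>)"
      using assms(3,4) by (auto simp: downshift_def downshift_phi_def a_def Let_def max_def)
    then show ?thesis
      using eta_le_scaled[of a n \<beta> "rho' s" w] False rho' assms(3,5,6) s(2) by (simp add: a_def)
  qed
qed

lemma borel_measurable_eta_comp_antimono:
  fixes rho :: "real \<Rightarrow> real"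
  assumes "\<And>s t. 0 < s \<Longrightarrow> s \<le> t \<Longrightarrow> rho t \<le> rho s" "\<And>t. 0 < t \<Longrightarrow> rho t \<le> real n"
    and "\<forall>i\<in>{1..n}. 0 \<le> w i"
  shows "(\<lambda>s. ennreal (eta n w (rho (max s 1)))) \<in> borel_measurable borel"
proof -
  have "antimono (\<lambda>s. eta n w (rho (max s 1)))"
    using assms by (intro antimonoI eta_mono) auto
  then have "(\<lambda>s. eta n w (rho (max s 1))) \<in> borel_measurable borel"
    by (rule borel_measurable_antimono)
  then show ?thesis by measurable
qed

lemma Ffun_le_approx:
  assumes "1 \<le> n" "\<forall>i\<in>{1..n}. 0 \<le> w i" "1 \<le> \<alpha>" "1 \<le> \<beta>"
    and "is_approx \<alpha> \<beta> rho rho'" "\<forall>t>0. rho t \<le> real n"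
  shows "Ffun n w rho
           \<le> ennreal \<alpha> * ennreal (Max (w ` {1..n})) + ennreal \<alpha> * ennreal (2 * \<beta>) * Ffun n w rho'"
proof -
  have rho'_le: "rho' t \<le> real n" if "0 < t" for t
    using assms(5,6) that unfolding is_approx_def by (meson order_trans)
  have rho'_antimono: "rho' t \<le> rho' s" if "0 < s" "s \<le> t" for s t
    using assms(5) that unfolding is_approx_def by blast
  define g where "g s = ennreal (eta n w (rho' (max s 1)))" for s
  have "Ffun n w rho
      \<le> ennreal \<alpha> * ennreal (Max (w ` {1..n})) + ennreal \<alpha> * ennreal (2 * \<beta>) * (\<integral>\<^sup>+s\<in>{1<..}. g s \<partial>lborel)"
    unfolding Ffun_def
  proof (rule nn_integral_split_rescaled)
    show "g \<in> borel_measurable borel"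
      unfolding g_def using rho'_antimono rho'_le assms(2) by (rule borel_measurable_eta_comp_antimono)
    show "ennreal (eta n w (rho t)) \<le> ennreal (Max (w ` {1..n}))" if "0 < t" for t
      using eta_le_Max[OF assms(1) _ assms(2)] assms(6) that by (simp add: ennreal_leI)
    show "ennreal (eta n w (rho t)) \<le> ennreal (2 * \<beta>) * g (t / \<alpha>)" if "\<alpha> < t" for t
      using eta_le_approx[OF assms(5,3,4) _ assms(6,2), of "t / \<alpha>"] that assms(3,4)
        eta_nonneg[OF rho'_le[of "t / \<alpha>"] assms(2)]
      by (simp add: g_def ennreal_mult[symmetric] ennreal_leI max_def)
  qed (use assms(3) in simp)
  moreover have "(\<integral>\<^sup>+s\<in>{1<..}. g s \<partial>lborel) \<le> Ffun n w rho'"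
    unfolding Ffun_def g_def by (intro nn_integral_mono) (simp add: indicator_def)
  ultimately show ?thesis
    by (meson add_left_mono mult_left_mono order_trans zero_le)
qed

theorem lemma3p4:
  fixes n :: nat and w :: "nat \<Rightarrow> real" and N :: "'a set" and indep :: "'a set \<Rightarrow> bool"
    and \<alpha> \<beta> :: real and rho' :: "real \<Rightarrow> real"
  assumes "n \<ge> 1"
    and "\<forall>i\<in>{1..n}. w i \<ge> 0"
    and "matroid N indep" and "loopless N indep" and "card N \<le> n"
    and "\<alpha> \<ge> 1" and "\<beta> \<ge> 1"
    and "is_approx \<alpha> \<beta> (rank_density N indep) rho'"
  shows "Ffun n w (rank_density N indep)
           \<le> ennreal (2 * \<alpha> * \<beta>) * Ffun n w rho' + ennreal (\<alpha> * Max (w ` {1..n}))"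
proof -
  have "\<forall>t>0. rank_density N indep t \<le> real n"
    using rank_density_bounds(2)[OF assms(3,4)] assms(5) by (meson of_nat_le_iff order_trans)
  then have "Ffun n w (rank_density N indep)
      \<le> ennreal \<alpha> * ennreal (Max (w ` {1..n})) + ennreal \<alpha> * ennreal (2 * \<beta>) * Ffun n w rho'"
    using Ffun_le_approx[OF assms(1,2,6,7,8)] by blast
  moreover have "0 \<le> Max (w ` {1..n})"
    using assms(1,2) order_trans[of 0 "w 1" "Max (w ` {1..n})"] by simp
  ultimately show ?thesis
    using assms(6,7) by (simp add: ennreal_mult[symmetric] mult_ac add.commute)
qed

end
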